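(* The map $\Psi:\mathcal{FL}_{\mathrm{T}}\to\mathcal{D}^+_{\mathrm{T}}$, $[\mathcal{F}]\mapsto (t^{\mathcal{F}}_\ast,e^{\mathcal{F}}_\ast)$, is a homeomorphism. Moreover $\mathcal{D}^+_{\mathrm{T}}$ is homeomorphic to $\mathbb{R}^5_{>0}$ via $(t_\ast,e_\ast)\mapsto(e_{12},e_{13},e_{23},e_{14},e_{24})$; hence $\mathcal{FL}_{\mathrm{T}}\cong\mathbb{R}^5_{>0}$.
   Context: Flags in $\mathbb{RP}^3$ are pairs $(V,\eta)$, $\eta$ a plane through the point $V$; a tuple is non-degenerate if $\eta_i(V_j)=0\iff i=j$. A tetrahedron of flags is a non-degenerate ordered quadruple $(V_m,\eta_m)_{m=1}^4$ with the $V_m$ not coplanar such that some projective tetrahedron with vertices $V_1,\dots,V_4$ has interior disjoint from all $\eta_m$. $\mathcal{FL}_{\mathrm{T}}$ is the set of tetrahedra of flags modulo the diagonal action of $\mathrm{PGL}(4)$, with the quotient topology. $(\mathrm{E})\mathrm{F}$ is the set of edge-faces $\sigma=(ij)k$, identified with even permutations $[ijkl]$ of $\{1,2,3,4\}$; $\sigma_+=(ki)j$, $\sigma_-=(jk)i$, $\bar\sigma=(ji)l$, $\mathrm{op}\,\sigma=(lk)j$. Triple ratio $t_\sigma=\frac{\bar\eta_i(\bar V_j)\bar\eta_j(\bar V_k)\bar\eta_k(\bar V_i)}{\bar\eta_i(\bar V_k)\bar\eta_j(\bar V_i)\bar\eta_k(\bar V_j)}$, edge ratio $e_\sigma=e_{ij}=\frac{\bar\eta_i(\bar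 V_k)\bar\eta_j(\bar V_l)}{\bar\eta_i(\bar V_l)\bar\eta_j(\bar V_k)}$. $\mathcal{D}^+_{\mathrm{T}}$ is the set of pairs $(t_\ast,e_\ast)$ of functions $(\mathrm{E})\mathrm{F}\to\mathbb{R}_{>0}$ satisfying, for all $\sigma$: $t_\sigma=t_{\sigma_+}=t_{\sigma_-}$, $e_\sigma=e_{\bar\sigma}$, $t_\sigma e_\sigma e_{\sigma_+}e_{\sigma_-}=1$, and $t_\sigma=e_{\mathrm{op}\sigma}e_{\mathrm{op}(\sigma_+)}e_{\mathrm{op}(\sigma_-)}$; it carries the subspace topology of $\mathbb{R}^{24}$. *)

theory Defs
  imports "HOL-Analysis.Analysis" "HOL-Combinatorics.Permutations"
begin

definition quotient_topology :: "'a topology \<Rightarrow> ('a \<Rightarrow> 'b) \<Rightarrow> 'b topology" where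
  "quotient_topology X f =
     topology (\<lambda>U. U \<subseteq> f ` topspace X \<and> openin X {x \<in> topspace X. f x \<in> U})"

lemma istopology_quotient:
  "istopology (\<lambda>U. U \<subseteq> f ` topspace X \<and> openin X {x \<in> topspace X. f x \<in> U})"
proof -
  have I: "openin X {x \<in> topspace X. f x \<in> S \<inter> T}"
    if "openin X {x \<in> topspace X. f x \<in> S}" "openin X {x \<in> topspace X. f x \<in> T}" for S T
  proof -
    have "{x \<in> topspace X. f x \<in> S \<inter> T} =
          {x \<in> topspace X. f x \<in> S} \<inter> {x \<in> topspace X. f x \<in> T}" by auto
    then show ?thesis using that by (simp add: openin_Int)
  qed
  have U: "openin X {x \<in> topspace X. f x \<in> \<Union>K}"
    if "\<forall>S\<in>K. openin X {x \<in> topspace X. f x \<in> S}" for K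
  proof -
    have "{x \<in> topspace X. f x \<in> \<Union>K} = (\<Union>S\<in>K. {x \<in> topspace X. f x \<in> S})" by auto
    then show ?thesis using that by (auto intro!: openin_Union)
  qed
  show ?thesis
    unfolding istopology_def using I U by blast
qed

lemma openin_quotient_topology:
  "openin (quotient_topology X f) U \<longleftrightarrow>
     U \<subseteq> f ` topspace X \<and> openin X {x \<in> topspace X. f x \<in> U}"
  unfolding quotient_topology_def
  by (simp add: topology_inverse'[OF istopology_quotient])

text \<open>Indices of the four flags are 1,2,3,4.  A point V of RP^3 is represented by a
nonzero vector in R^4, a plane eta by a nonzero covector, also written as a vector of R^4;
eta(V) is the dot product.\<close>

type_synonym cfg = "(nat \<Rightarrow> real^4) \<times> (nat \<Rightarrow> real^4)"

definition idx :: "nat set" where "idx = {1..4}"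

definition is_tetrahedron_of_flags :: "cfg \<Rightarrow> bool" where
  "is_tetrahedron_of_flags F \<longleftrightarrow>
     (let V = fst F; \<eta> = snd F in
       V \<in> PiE idx (\<lambda>_. UNIV) \<and> \<eta> \<in> PiE idx (\<lambda>_. UNIV) \<and>
       (\<forall>i\<in>idx. V i \<noteq> 0 \<and> \<eta> i \<noteq> 0) \<and>
       \<comment> \<open>flags, and non-degeneracy: eta_i(V_j) = 0 iff i = j\<close>
       (\<forall>i\<in>idx. \<forall>j\<in>idx. (\<eta> i \<bullet> V j) = 0 \<longleftrightarrow> i = j) \<and>
       \<comment> \<open>the V_m are not coplanar\<close>
       independent (V ` idx) \<and> card (V ` idx) = 4 \<and>
       \<comment> \<open>some projective tetrahedron with vertices V_1..V_4 (i.e. the image in RP^3 of a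
          cone spanned by s_1 V_1, ..., s_4 V_4 for signs s_i) has interior disjoint from
          every plane eta_m\<close>
       (\<exists>s. (\<forall>i\<in>idx. s i = 1 \<or> s i = -1) \<and>
          (\<forall>m\<in>idx. \<forall>w. (\<forall>i\<in>idx. w i > 0) \<longrightarrow>
              \<eta> m \<bullet> (\<Sum>i\<in>idx. (w i * s i) *\<^sub>R V i) \<noteq> 0)))"

definition TetCfg :: "cfg set" where
  "TetCfg = {F. is_tetrahedron_of_flags F}"

text \<open>Two representatives define the same point of FL_T iff they differ by rescaling the
representatives and by the diagonal action of PGL(4) (V \<mapsto> A V, eta \<mapsto> eta o A^-1).\<close>

definition cfg_equiv :: "cfg \<Rightarrow> cfg \<Rightarrow> bool" where
  "cfg_equiv F G \<longleftrightarrow>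
     (\<exists>A :: real^4^4. invertible A \<and>
        (\<exists>a b :: nat \<Rightarrow> real. \<forall>i\<in>idx. a i \<noteq> 0 \<and> b i \<noteq> 0 \<and>
            fst G i = a i *\<^sub>R (A *v fst F i) \<and>
            snd G i = b i *\<^sub>R (snd F i v* matrix_inv A)))"

definition cfg_class :: "cfg \<Rightarrow> cfg set" where
  "cfg_class F = {G \<in> TetCfg. cfg_equiv F G}"

definition cfg_top :: "cfg topology" where
  "cfg_top = subtopology
     (prod_topology (product_topology (\<lambda>_. euclidean) idx) (product_topology (\<lambda>_. euclidean) idx))
     TetCfg"

definition FL_T :: "cfg set topology" where
  "FL_T = quotient_topology cfg_top cfg_class"

text \<open>An edge-face sigma = (ij)k is the triple (i,j,k); l is the remaining index, and
(ij)k is an edge-face iff [ijkl] is an even permutation of {1,2,3,4}.\<close>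

definition fourth :: "nat \<Rightarrow> nat \<Rightarrow> nat \<Rightarrow> nat" where
  "fourth i j k = the_elem (idx - {i, j, k})"

definition perm_of :: "nat \<times> nat \<times> nat \<Rightarrow> nat \<Rightarrow> nat" where
  "perm_of \<sigma> = (case \<sigma> of (i, j, k) \<Rightarrow>
     (\<lambda>m. if m = 1 then i else if m = 2 then j else if m = 3 then k
          else if m = 4 then fourth i j k else m))"

definition EF :: "(nat \<times> nat \<times> nat) set" where
  "EF = {(i, j, k). i \<in> idx \<and> j \<in> idx \<and> k \<in> idx \<and> distinct [i, j, k] \<and>
                    evenperm (perm_of (i, j, k))}"

definition sigma_plus :: "nat \<times> nat \<times> nat \<Rightarrow> nat \<times> nat \<times> nat" where
  "sigma_plus \<sigma> = (case \<sigma> of (i, j, k) \<Rightarrow> (k, i, j))"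

definition sigma_minus :: "nat \<times> nat \<times> nat \<Rightarrow> nat \<times> nat \<times> nat" where
  "sigma_minus \<sigma> = (case \<sigma> of (i, j, k) \<Rightarrow> (j, k, i))"

definition sigma_bar :: "nat \<times> nat \<times> nat \<Rightarrow> nat \<times> nat \<times> nat" where
  "sigma_bar \<sigma> = (case \<sigma> of (i, j, k) \<Rightarrow> (j, i, fourth i j k))"

definition sigma_op :: "nat \<times> nat \<times> nat \<Rightarrow> nat \<times> nat \<times> nat" where
  "sigma_op \<sigma> = (case \<sigma> of (i, j, k) \<Rightarrow> (fourth i j k, k, j))"

definition triple_ratio :: "cfg \<Rightarrow> nat \<times> nat \<times> nat \<Rightarrow> real" where
  "triple_ratio F \<sigma> = (case \<sigma> of (i, j, k) \<Rightarrow>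
     (let V = fst F; \<eta> = snd F in
       ((\<eta> i \<bullet> V j) * (\<eta> j \<bullet> V k) * (\<eta> k \<bullet> V i)) /
       ((\<eta> i \<bullet> V k) * (\<eta> j \<bullet> V i) * (\<eta> k \<bullet> V j))))"

definition edge_ratio :: "cfg \<Rightarrow> nat \<times> nat \<times> nat \<Rightarrow> real" where
  "edge_ratio F \<sigma> = (case \<sigma> of (i, j, k) \<Rightarrow>
     (let V = fst F; \<eta> = snd F; l = fourth i j k in
       ((\<eta> i \<bullet> V k) * (\<eta> j \<bullet> V l)) / ((\<eta> i \<bullet> V l) * (\<eta> j \<bullet> V k))))"

type_synonym coords = "(nat \<times> nat \<times> nat \<Rightarrow> real) \<times> (nat \<times> nat \<times> nat \<Rightarrow> real)"

definition Dplus_T :: "coords set" where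
  "Dplus_T = {(t, e). t \<in> PiE EF (\<lambda>_. UNIV) \<and> e \<in> PiE EF (\<lambda>_. UNIV) \<and>
     (\<forall>\<sigma>\<in>EF. t \<sigma> > 0 \<and> e \<sigma> > 0 \<and>
        t \<sigma> = t (sigma_plus \<sigma>) \<and> t \<sigma> = t (sigma_minus \<sigma>) \<and>
        e \<sigma> = e (sigma_bar \<sigma>) \<and>
        t \<sigma> * e \<sigma> * e (sigma_plus \<sigma>) * e (sigma_minus \<sigma>) = 1 \<and>
        t \<sigma> = e (sigma_op \<sigma>) * e (sigma_op (sigma_plus \<sigma>)) * e (sigma_op (sigma_minus \<sigma>)))}"

definition Dplus_top :: "coords topology" where
  "Dplus_top = subtopology
     (prod_topology (product_topology (\<lambda>_. euclideanreal) EF)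
                    (product_topology (\<lambda>_. euclideanreal) EF))
     Dplus_T"

definition Psi :: "cfg set \<Rightarrow> coords" where
  "Psi C = (let F = (SOME F. F \<in> C) in
              (restrict (triple_ratio F) EF, restrict (edge_ratio F) EF))"

text \<open>e_ij is e_sigma for the unique edge-face sigma = (ij)k:
  e_12 = e_(12)3, e_13 = e_(13)4, e_23 = e_(23)1, e_14 = e_(14)2, e_24 = e_(24)3.\<close>

definition edge_coords :: "coords \<Rightarrow> real \<times> real \<times> real \<times> real \<times> real" where
  "edge_coords te = (let e = snd te in
     (e (1,2,3), e (1,3,4), e (2,3,1), e (1,4,2), e (2,4,3)))"

definition R5pos :: "(real \<times> real \<times> real \<times> real \<times> real) topology" where
  "R5pos = subtopology euclidean
     {(a, b, c, d, f). a > 0 \<and> b > 0 \<and> c > 0 \<and> d > 0 \<and> f > 0}"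

end

theory Submission
  imports Defs
begin

text \<open>Write \<open>m\<^sub>i\<^sub>j = \<eta>\<^sub>i(V\<^sub>j)\<close> for the pairing matrix of a quadruple of flags. The action of
  \<open>PGL(4)\<close> together with the rescaling of representatives changes it by \<open>m\<^sub>i\<^sub>j \<mapsto> b\<^sub>i a\<^sub>j m\<^sub>i\<^sub>j\<close>,
  and for tetrahedra of flags, whose vertices form a basis, this rescaling class determines the
  configuration up to equivalence. Triple and edge ratios are invariant under such rescalings, so
  \<open>\<Psi>\<close> is well defined; the relations defining \<open>\<D>\<^sup>+\<^sub>T\<close> are identities between the \<open>m\<^sub>i\<^sub>j\<close>, and
  positivity comes from the sign pattern that the tetrahedron condition forces on each row of
  \<open>m\<close>. Conversely, the five edge coordinates \<open>e\<^sub>1\<^sub>2, e\<^sub>1\<^sub>3, e\<^sub>2\<^sub>3, e\<^sub>1\<^sub>4, e\<^sub>2\<^sub>4\<close> determine all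
  other coordinates of \<open>\<D>\<^sup>+\<^sub>T\<close>, and they determine an explicit normal form: the standard basis
  as vertices and a pairing matrix whose entries are monomials in the edge coordinates. Its
  ratios are the prescribed ones, every tetrahedron of flags with these ratios is equivalent to
  it, and it depends continuously on the coordinates, so it inverts \<open>\<Psi>\<close>.\<close>

section \<open>Indices and edge-faces\<close>

lemma idx_eq: "idx = {1, 2, 3, 4}"
  by (auto simp: idx_def)

lemma finite_idx [simp]: "finite idx" and card_idx: "card idx = 4"
  by (simp_all add: idx_eq)

lemma fourth_eval [simp]:
  "fourth 1 2 3 = 4" "fourth 1 2 4 = 3" "fourth 1 3 2 = 4" "fourth 1 3 4 = 2"
  "fourth 1 4 2 = 3" "fourth 1 4 3 = 2" "fourth 2 1 3 = 4" "fourth 2 1 4 = 3"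
  "fourth 2 3 1 = 4" "fourth 2 3 4 = 1" "fourth 2 4 1 = 3" "fourth 2 4 3 = 1"
  "fourth 3 1 2 = 4" "fourth 3 1 4 = 2" "fourth 3 2 1 = 4" "fourth 3 2 4 = 1"
  "fourth 3 4 1 = 2" "fourth 3 4 2 = 1" "fourth 4 1 2 = 3" "fourth 4 1 3 = 2"
  "fourth 4 2 1 = 3" "fourth 4 2 3 = 1" "fourth 4 3 1 = 2" "fourth 4 3 2 = 1"
  by (simp_all add: fourth_def idx_eq insert_Diff_if)

text \<open>Substituting an equation \<open>i = 1\<close> makes the simplifier write \<open>Suc 0\<close> for \<open>1 :: nat\<close>.\<close>
lemmas fourth_eval_Suc [simp] = fourth_eval [unfolded One_nat_def]

lemma idx_eq_insert_fourth:
  assumes "i \<in> idx" "j \<in> idx" "k \<in> idx" "distinct [i, j, k]"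
  shows "fourth i j k \<notin> {i, j, k}" "idx = {i, j, k, fourth i j k}"
proof -
  have "i = 1 \<or> i = 2 \<or> i = 3 \<or> i = 4" "j = 1 \<or> j = 2 \<or> j = 3 \<or> j = 4"
    "k = 1 \<or> k = 2 \<or> k = 3 \<or> k = 4" using assms(1-3) unfolding idx_eq by blast+
  then have "fourth i j k \<notin> {i, j, k} \<and> idx = {i, j, k, fourth i j k}"
    using assms(4) unfolding idx_eq by (elim disjE) (simp_all, auto)
  then show "fourth i j k \<notin> {i, j, k}" "idx = {i, j, k, fourth i j k}" by simp_all
qed

lemma perm_of_eq_apply_transps:
  "perm_of (1,2,3) = apply_transps []"
  "perm_of (1,2,4) = apply_transps [(3,4)]"
  "perm_of (1,3,2) = apply_transps [(2,3)]"
  "perm_of (1,3,4) = apply_transps [(2,3),(3,4)]"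
  "perm_of (1,4,2) = apply_transps [(2,4),(3,4)]"
  "perm_of (1,4,3) = apply_transps [(2,4)]"
  "perm_of (2,1,3) = apply_transps [(1,2)]"
  "perm_of (2,1,4) = apply_transps [(1,2),(3,4)]"
  "perm_of (2,3,1) = apply_transps [(1,2),(2,3)]"
  "perm_of (2,3,4) = apply_transps [(1,2),(2,3),(3,4)]"
  "perm_of (2,4,1) = apply_transps [(1,2),(2,4),(3,4)]"
  "perm_of (2,4,3) = apply_transps [(1,2),(2,4)]"
  "perm_of (3,1,2) = apply_transps [(1,3),(2,3)]"
  "perm_of (3,1,4) = apply_transps [(1,3),(2,3),(3,4)]"
  "perm_of (3,2,1) = apply_transps [(1,3)]"
  "perm_of (3,2,4) = apply_transps [(1,3),(3,4)]"
  "perm_of (3,4,1) = apply_transps [(1,3),(2,4)]"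
  "perm_of (3,4,2) = apply_transps [(1,3),(2,4),(3,4)]"
  "perm_of (4,1,2) = apply_transps [(1,4),(2,4),(3,4)]"
  "perm_of (4,1,3) = apply_transps [(1,4),(2,4)]"
  "perm_of (4,2,1) = apply_transps [(1,4),(3,4)]"
  "perm_of (4,2,3) = apply_transps [(1,4)]"
  "perm_of (4,3,1) = apply_transps [(1,4),(2,3),(3,4)]"
  "perm_of (4,3,2) = apply_transps [(1,4),(2,3)]"
  unfolding perm_of_def prod.case fourth_eval
  by (auto simp: fun_eq_iff transpose_def)

lemma evenperm_perm_of:
  "evenperm (perm_of (1,2,3))" "\<not> evenperm (perm_of (1,2,4))"
  "\<not> evenperm (perm_of (1,3,2))" "evenperm (perm_of (1,3,4))"
  "evenperm (perm_of (1,4,2))" "\<not> evenperm (perm_of (1,4,3))"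
  "\<not> evenperm (perm_of (2,1,3))" "evenperm (perm_of (2,1,4))"
  "evenperm (perm_of (2,3,1))" "\<not> evenperm (perm_of (2,3,4))"
  "\<not> evenperm (perm_of (2,4,1))" "evenperm (perm_of (2,4,3))"
  "evenperm (perm_of (3,1,2))" "\<not> evenperm (perm_of (3,1,4))"
  "\<not> evenperm (perm_of (3,2,1))" "evenperm (perm_of (3,2,4))"
  "evenperm (perm_of (3,4,1))" "\<not> evenperm (perm_of (3,4,2))"
  "\<not> evenperm (perm_of (4,1,2))" "evenperm (perm_of (4,1,3))"
  "evenperm (perm_of (4,2,1))" "\<not> evenperm (perm_of (4,2,3))"
  "\<not> evenperm (perm_of (4,3,1))" "evenperm (perm_of (4,3,2))"
  unfolding perm_of_eq_apply_transps
  by (simp_all del: apply_transps_Cons add: evenperm_apply_transps_iff)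

lemma EF_eq:
  "EF = {(1,2,3), (1,3,4), (1,4,2), (2,1,4), (2,3,1), (2,4,3),
         (3,1,2), (3,2,4), (3,4,1), (4,1,3), (4,2,1), (4,3,2)}" (is "_ = ?S")
proof (rule set_eqI)
  fix x :: "nat \<times> nat \<times> nat"
  obtain i j k where x: "x = (i, j, k)" by (cases x)
  show "x \<in> EF \<longleftrightarrow> x \<in> ?S"
  proof (cases "i \<in> idx \<and> j \<in> idx \<and> k \<in> idx")
    case True
    then show ?thesis
      unfolding x EF_def idx_eq mem_Collect_eq case_prod_conv
      by (simp only: insert_iff empty_iff) (elim conjE disjE; simp only: evenperm_perm_of; simp)
  next
    case False
    then show ?thesis unfolding x EF_def by (auto simp: idx_eq)
  qed
qed

lemma EF_D:
  assumes "(i, j, k) \<in> EF"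
  shows "i \<in> idx" "j \<in> idx" "k \<in> idx" "fourth i j k \<in> idx" "distinct [i, j, k, fourth i j k]"
proof -
  have "i \<in> idx \<and> j \<in> idx \<and> k \<in> idx \<and> fourth i j k \<in> idx \<and> distinct [i, j, k, fourth i j k]"
    using assms unfolding EF_eq by (elim insertE emptyE) (simp_all add: idx_eq)
  then show "i \<in> idx" "j \<in> idx" "k \<in> idx" "fourth i j k \<in> idx" "distinct [i, j, k, fourth i j k]"
    by simp_all
qed

lemma fourth_perm_EF:
  assumes "(i, j, k) \<in> EF"
  shows "fourth k i j = fourth i j k" "fourth j k i = fourth i j k" "fourth j i (fourth i j k) = k"
    "fourth (fourth i j k) k j = i" "fourth (fourth i j k) j i = k" "fourth (fourth i j k) i k = j"
proof -
  have "fourth k i j = fourth i j k \<and> fourth j k i = fourth i j k \<and> fourth j i (fourth i j k) = k \<and>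
    fourth (fourth i j k) k j = i \<and> fourth (fourth i j k) j i = k \<and> fourth (fourth i j k) i k = j"
    using assms unfolding EF_eq by (elim insertE emptyE) simp_all
  then show "fourth k i j = fourth i j k" "fourth j k i = fourth i j k" "fourth j i (fourth i j k) = k"
    "fourth (fourth i j k) k j = i" "fourth (fourth i j k) j i = k" "fourth (fourth i j k) i k = j"
    by simp_all
qed

lemma sigma_simps [simp]:
  "sigma_plus (i, j, k) = (k, i, j)" "sigma_minus (i, j, k) = (j, k, i)"
  "sigma_bar (i, j, k) = (j, i, fourth i j k)" "sigma_op (i, j, k) = (fourth i j k, k, j)"
  by (simp_all add: sigma_plus_def sigma_minus_def sigma_bar_def sigma_op_def)

lemma EF_sigma_closed:
  assumes "\<sigma> \<in> EF"
  shows "sigma_plus \<sigma> \<in> EF" "sigma_minus \<sigma> \<in> EF" "sigma_bar \<sigma> \<in> EF" "sigma_op \<sigma> \<in> EF"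
proof -
  have "sigma_plus \<sigma> \<in> EF \<and> sigma_minus \<sigma> \<in> EF \<and> sigma_bar \<sigma> \<in> EF \<and> sigma_op \<sigma> \<in> EF"
    using assms unfolding EF_eq by (elim insertE emptyE) simp_all
  then show "sigma_plus \<sigma> \<in> EF" "sigma_minus \<sigma> \<in> EF" "sigma_bar \<sigma> \<in> EF" "sigma_op \<sigma> \<in> EF"
    by simp_all
qed


section \<open>Quotient topologies and linear algebra\<close>

lemma topspace_quotient_topology: "topspace (quotient_topology X f) = f ` topspace X"
proof
  show "topspace (quotient_topology X f) \<subseteq> f ` topspace X"
    using openin_topspace[of "quotient_topology X f", unfolded openin_quotient_topology] by blast
  have "{x \<in> topspace X. f x \<in> f ` topspace X} = topspace X" by auto
  then have "openin (quotient_topology X f) (f ` topspace X)"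
    by (simp add: openin_quotient_topology)
  then show "f ` topspace X \<subseteq> topspace (quotient_topology X f)"
    by (rule openin_subset)
qed

lemma continuous_map_quotient_topology: "continuous_map X (quotient_topology X f) f"
  unfolding continuous_map_def topspace_quotient_topology openin_quotient_topology by auto

lemma continuous_map_from_quotient_topology:
  assumes "continuous_map X Y (g \<circ> f)"
  shows "continuous_map (quotient_topology X f) Y g"
  unfolding continuous_map_def topspace_quotient_topology
proof (intro conjI allI impI)
  show "g \<in> f ` topspace X \<rightarrow> topspace Y"
    using assms unfolding continuous_map_def by auto
  fix U assume "openin Y U"
  moreover have "{x \<in> topspace X. f x \<in> {y \<in> f ` topspace X. g y \<in> U}} = {x \<in> topspace X. (g \<circ> f) x \<in> U}"
    by auto
  ultimately show "openin (quotient_topology X f) {y \<in> f ` topspace X. g y \<in> U}"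
    using assms unfolding openin_quotient_topology continuous_map_def by auto
qed

lemma matrix_inv_unique:
  fixes A B :: "'a::comm_ring_1^'n^'n"
  assumes "A ** B = mat 1" "B ** A = mat 1"
  shows "matrix_inv A = B"
  unfolding matrix_inv_def
proof (rule some_equality)
  fix X assume "A ** X = mat 1 \<and> X ** A = mat 1"
  then have "X = X ** (A ** B)" "X ** A = mat 1" using assms(1) by simp_all
  then show "X = B" by (simp add: matrix_mul_assoc)
qed (use assms in simp)

lemma matrix_inv_inverse:
  fixes A :: "'a::comm_ring_1^'n^'n"
  assumes "invertible A"
  shows "A ** matrix_inv A = mat 1" "matrix_inv A ** A = mat 1"
proof -
  obtain B where B: "A ** B = mat 1" "B ** A = mat 1" using assms unfolding invertible_def by blast
  then have "matrix_inv A = B" by (rule matrix_inv_unique)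
  with B show "A ** matrix_inv A = mat 1" "matrix_inv A ** A = mat 1" by simp_all
qed

lemma exists_invertible_matrix_on_basis:
  fixes V W :: "'i \<Rightarrow> real^'n"
  assumes "independent (V ` I)" "inj_on V I" "span (W ` I) = UNIV"
  obtains A where "invertible A" "\<And>j. j \<in> I \<Longrightarrow> A *v V j = W j"
proof -
  obtain g where g: "linear g" "\<forall>x\<in>V ` I. g x = (W \<circ> inv_into I V) x"
      "range g = span ((W \<circ> inv_into I V) ` V ` I)"
    using linear_independent_extend_subspace[OF assms(1), of "W \<circ> inv_into I V"] by blast
  have "(W \<circ> inv_into I V) ` V ` I = W ` I"
    using inv_into_f_f[OF assms(2)] by (auto simp: image_iff)
  then have "surj g" using g(3) assms(3) by simp
  then obtain g' where "linear g'" "\<forall>x. g' (g x) = x" "\<forall>x. g (g' x) = x"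
    using linear_surjective_isomorphism[OF g(1)] by blast
  then have "invertible (matrix g)"
    unfolding matrix_invertible[OF g(1)] by (auto simp: fun_eq_iff)
  moreover have "matrix g *v V j = W j" if "j \<in> I" for j
    using g(1,2) inv_into_f_f[OF assms(2) that] that by simp
  ultimately show ?thesis using that by blast
qed

lemma inner_eq_on_spanning_set_imp_eq:
  fixes x y :: "'a::real_inner"
  assumes "span S = UNIV" "\<And>w. w \<in> S \<Longrightarrow> x \<bullet> w = y \<bullet> w"
  shows "x = y"
proof -
  have "orthogonal (x - y) (x - y)"
    by (rule orthogonal_to_span[of _ S]) (use assms in \<open>auto simp: orthogonal_def inner_diff_left\<close>)
  then show ?thesis by (simp add: orthogonal_self)
qed

lemma span_image_scaleR:
  assumes "\<And>j. j \<in> I \<Longrightarrow> c j \<noteq> 0"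
  shows "span ((\<lambda>j. c j *\<^sub>R V j) ` I) = span (V ` I)"
proof -
  have "V j \<in> span ((\<lambda>j. c j *\<^sub>R V j) ` I)" if "j \<in> I" for j
    using span_mul[OF span_base[of "c j *\<^sub>R V j"], of _ "1 / c j"] assms that by auto
  moreover have "(\<lambda>j. c j *\<^sub>R V j) ` I \<subseteq> span (V ` I)"
    by (intro image_subsetI span_mul span_base imageI)
  ultimately show ?thesis
    unfolding span_eq by blast
qed

lemma pos_combination_eq_0:
  fixes x y z :: real
  assumes "x * y < 0" "z \<noteq> 0"
  obtains u v w where "u > 0" "v > 0" "w > 0" "u * x + v * y + w * z = 0"
proof (cases "x * z > 0")
  case True
  then have "(x + z) * y < 0"
    using assms(1) by (auto simp: mult_less_0_iff zero_less_mult_iff)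
  then have "- (x + z) / y > 0" "1 * x + (- (x + z) / y) * y + 1 * z = 0"
    by (auto simp: mult_less_0_iff zero_less_divide_iff)
  then show ?thesis using that[of 1 "- (x + z) / y" 1] by simp
next
  case False
  then have "y * z > 0"
    using assms by (auto simp: mult_less_0_iff zero_less_mult_iff not_less)
  then have "(y + z) * x < 0"
    using assms(1) by (auto simp: mult_less_0_iff zero_less_mult_iff)
  then have "- (y + z) / x > 0" "(- (y + z) / x) * x + 1 * y + 1 * z = 0"
    by (auto simp: mult_less_0_iff zero_less_divide_iff)
  then show ?thesis using that[of "- (y + z) / x" 1 1] by simp
qed


section \<open>Tetrahedra of flags up to equivalence\<close>

lemma TetCfgD:
  assumes "F \<in> TetCfg"
  shows "fst F \<in> PiE idx (\<lambda>_. UNIV)" "snd F \<in> PiE idx (\<lambda>_. UNIV)"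
    "\<forall>i\<in>idx. \<forall>j\<in>idx. snd F i \<bullet> fst F j = 0 \<longleftrightarrow> i = j"
    "independent (fst F ` idx)" "card (fst F ` idx) = 4"
    "\<exists>s. (\<forall>i\<in>idx. s i = 1 \<or> s i = -1) \<and>
          (\<forall>m\<in>idx. \<forall>w. (\<forall>i\<in>idx. w i > 0) \<longrightarrow>
              snd F m \<bullet> (\<Sum>i\<in>idx. (w i * s i) *\<^sub>R fst F i) \<noteq> 0)"
  using assms unfolding TetCfg_def is_tetrahedron_of_flags_def Let_def mem_Collect_eq
  by auto

lemma topspace_cfg_top: "topspace cfg_top = TetCfg"
proof -
  have "F \<in> PiE idx (\<lambda>_. UNIV) \<times> PiE idx (\<lambda>_. UNIV)" if "F \<in> TetCfg" for F
    using TetCfgD(1,2)[OF that] unfolding mem_Times_iff by (rule conjI)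
  then have "TetCfg \<subseteq> PiE idx (\<lambda>_. UNIV) \<times> PiE idx (\<lambda>_. UNIV)" by blast
  then show ?thesis by (simp add: cfg_top_def Int_absorb1)
qed

lemma topspace_FL_T: "topspace FL_T = cfg_class ` TetCfg"
  by (simp add: FL_T_def topspace_quotient_topology topspace_cfg_top)

definition pairing :: "cfg \<Rightarrow> nat \<Rightarrow> nat \<Rightarrow> real" where
  "pairing F i j = snd F i \<bullet> fst F j"

lemma inner_sum_pairing:
  "snd F m \<bullet> (\<Sum>i\<in>idx. c i *\<^sub>R fst F i) = (\<Sum>i\<in>idx. c i * pairing F m i)"
  by (simp add: inner_sum_right pairing_def)

lemma pairing_eq_0_iff:
  "F \<in> TetCfg \<Longrightarrow> i \<in> idx \<Longrightarrow> j \<in> idx \<Longrightarrow> pairing F i j = 0 \<longleftrightarrow> i = j"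
  using TetCfgD(3) unfolding pairing_def by blast

lemma span_tetrahedron_vertices:
  assumes "F \<in> TetCfg" shows "span (fst F ` idx) = UNIV"
proof -
  have "UNIV \<subseteq> span (fst F ` idx)"
    by (rule card_ge_dim_independent) (simp_all add: TetCfgD(4,5)[OF assms])
  then show ?thesis by blast
qed

definition rescaled :: "(nat \<Rightarrow> nat \<Rightarrow> real) \<Rightarrow> (nat \<Rightarrow> nat \<Rightarrow> real) \<Rightarrow> bool" where
  "rescaled m m' \<longleftrightarrow> (\<exists>a b. (\<forall>i\<in>idx. a i \<noteq> 0 \<and> b i \<noteq> 0) \<and>
                             (\<forall>i\<in>idx. \<forall>j\<in>idx. m' i j = b i * a j * m i j))"

lemma rescaled_refl: "rescaled m m"
  unfolding rescaled_def by (intro exI[of _ "\<lambda>_. 1"]) simp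

lemma rescaled_sym:
  assumes "rescaled m m'" shows "rescaled m' m"
proof -
  obtain a b where ab: "\<forall>i\<in>idx. a i \<noteq> 0 \<and> b i \<noteq> 0"
    and m': "\<forall>i\<in>idx. \<forall>j\<in>idx. m' i j = b i * a j * m i j"
    using assms unfolding rescaled_def by blast
  show ?thesis unfolding rescaled_def
    by (rule exI[of _ "\<lambda>i. 1 / a i"], rule exI[of _ "\<lambda>i. 1 / b i"]) (use ab m' in auto)
qed

lemma rescaled_trans:
  assumes "rescaled m m'" "rescaled m' m''" shows "rescaled m m''"
proof -
  obtain a b where ab: "\<forall>i\<in>idx. a i \<noteq> 0 \<and> b i \<noteq> 0"
    and m': "\<forall>i\<in>idx. \<forall>j\<in>idx. m' i j = b i * a j * m i j"
    using assms(1) unfolding rescaled_def by blast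
  obtain a' b' where ab': "\<forall>i\<in>idx. a' i \<noteq> 0 \<and> b' i \<noteq> 0"
    and m'': "\<forall>i\<in>idx. \<forall>j\<in>idx. m'' i j = b' i * a' j * m' i j"
    using assms(2) unfolding rescaled_def by blast
  show ?thesis unfolding rescaled_def
    by (rule exI[of _ "\<lambda>i. a' i * a i"], rule exI[of _ "\<lambda>i. b' i * b i"]) (use ab ab' m' m'' in auto)
qed

lemma rescaled_pairing_if_cfg_equiv:
  assumes "cfg_equiv F G" shows "rescaled (pairing F) (pairing G)"
proof -
  obtain A a b where A: "invertible A" and h: "\<forall>i\<in>idx. a i \<noteq> 0 \<and> b i \<noteq> 0 \<and>
      fst G i = a i *\<^sub>R (A *v fst F i) \<and> snd G i = b i *\<^sub>R (snd F i v* matrix_inv A)"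
    using assms unfolding cfg_equiv_def by blast
  have "pairing G i j = b i * a j * pairing F i j" if "i \<in> idx" "j \<in> idx" for i j
    using h that matrix_inv_inverse(2)[OF A]
    by (simp add: pairing_def dot_lmul_matrix matrix_vector_mul_assoc)
  then show ?thesis unfolding rescaled_def using h by blast
qed

lemma cfg_equiv_if_rescaled_pairing:
  assumes F: "F \<in> TetCfg" and G: "G \<in> TetCfg" and "rescaled (pairing F) (pairing G)"
  shows "cfg_equiv F G"
proof -
  obtain a b where ab: "\<forall>i\<in>idx. a i \<noteq> 0 \<and> b i \<noteq> 0"
    and m: "\<forall>i\<in>idx. \<forall>j\<in>idx. pairing G i j = b i * a j * pairing F i j"
    using assms(3) unfolding rescaled_def by blast
  have inj: "inj_on (fst F) idx"
    using TetCfgD(5)[OF F] by (intro eq_card_imp_inj_on) (simp_all add: card_idx)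
  have "span ((\<lambda>j. (1 / a j) *\<^sub>R fst G j) ` idx) = span (fst G ` idx)"
    by (rule span_image_scaleR) (use ab in simp)
  then have "span ((\<lambda>j. (1 / a j) *\<^sub>R fst G j) ` idx) = UNIV"
    using span_tetrahedron_vertices[OF G] by simp
  then obtain A where A: "invertible A" "\<And>j. j \<in> idx \<Longrightarrow> A *v fst F j = (1 / a j) *\<^sub>R fst G j"
    using exists_invertible_matrix_on_basis[OF TetCfgD(4)[OF F] inj] by blast
  have V: "fst G j = a j *\<^sub>R (A *v fst F j)" if "j \<in> idx" for j
    using A(2)[OF that] ab that by simp
  have \<eta>: "snd G i = b i *\<^sub>R (snd F i v* matrix_inv A)" if i: "i \<in> idx" for i
  proof (rule inner_eq_on_spanning_set_imp_eq[OF span_tetrahedron_vertices[OF G]])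
    fix w assume "w \<in> fst G ` idx"
    then obtain j where j: "j \<in> idx" "w = fst G j" by blast
    have "matrix_inv A *v fst G j = a j *\<^sub>R fst F j"
      using V[OF j(1)] matrix_inv_inverse(2)[OF A(1)]
      by (simp add: matrix_vector_mult_scaleR matrix_vector_mul_assoc)
    then show "snd G i \<bullet> w = (b i *\<^sub>R (snd F i v* matrix_inv A)) \<bullet> w"
      using m i j by (simp add: dot_lmul_matrix pairing_def)
  qed
  have "\<forall>i\<in>idx. a i \<noteq> 0 \<and> b i \<noteq> 0 \<and>
      fst G i = a i *\<^sub>R (A *v fst F i) \<and> snd G i = b i *\<^sub>R (snd F i v* matrix_inv A)"
    using ab V \<eta> by blast
  then show ?thesis
    unfolding cfg_equiv_def using A(1) by blast
qed

lemma cfg_class_eq: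
  assumes "F \<in> TetCfg" "G \<in> TetCfg" "cfg_equiv F G"
  shows "cfg_class F = cfg_class G"
proof -
  have FG: "rescaled (pairing F) (pairing G)"
    using assms(3) by (rule rescaled_pairing_if_cfg_equiv)
  have "cfg_equiv F H \<longleftrightarrow> cfg_equiv G H" if H: "H \<in> TetCfg" for H
  proof
    assume "cfg_equiv F H"
    then have "rescaled (pairing F) (pairing H)" by (rule rescaled_pairing_if_cfg_equiv)
    then show "cfg_equiv G H"
      using cfg_equiv_if_rescaled_pairing[OF assms(2) H] rescaled_trans[OF rescaled_sym[OF FG]] by blast
  next
    assume "cfg_equiv G H"
    then have "rescaled (pairing G) (pairing H)" by (rule rescaled_pairing_if_cfg_equiv)
    then show "cfg_equiv F H"
      using cfg_equiv_if_rescaled_pairing[OF assms(1) H] rescaled_trans[OF FG] by blast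
  qed
  then show ?thesis unfolding cfg_class_def by blast
qed

lemma mem_cfg_class: "F \<in> TetCfg \<Longrightarrow> F \<in> cfg_class F"
  unfolding cfg_class_def using cfg_equiv_if_rescaled_pairing rescaled_refl by blast


section \<open>Triple and edge ratios\<close>

definition triple_ratio_of :: "(nat \<Rightarrow> nat \<Rightarrow> real) \<Rightarrow> nat \<times> nat \<times> nat \<Rightarrow> real" where
  "triple_ratio_of m \<sigma> = (case \<sigma> of (i, j, k) \<Rightarrow> (m i j * m j k * m k i) / (m i k * m j i * m k j))"

definition edge_ratio_of :: "(nat \<Rightarrow> nat \<Rightarrow> real) \<Rightarrow> nat \<times> nat \<times> nat \<Rightarrow> real" where
  "edge_ratio_of m \<sigma> = (case \<sigma> of (i, j, k) \<Rightarrow>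
     (m i k * m j (fourth i j k)) / (m i (fourth i j k) * m j k))"

lemma triple_ratio_eq: "triple_ratio F = triple_ratio_of (pairing F)"
  by (auto simp: fun_eq_iff triple_ratio_def triple_ratio_of_def pairing_def Let_def)

lemma edge_ratio_eq: "edge_ratio F = edge_ratio_of (pairing F)"
  by (auto simp: fun_eq_iff edge_ratio_def edge_ratio_of_def pairing_def Let_def)

lemma ratios_of_rescaled:
  assumes "rescaled m m'" and "\<sigma> \<in> EF"
  shows "triple_ratio_of m' \<sigma> = triple_ratio_of m \<sigma>" "edge_ratio_of m' \<sigma> = edge_ratio_of m \<sigma>"
proof -
  obtain a b where ab: "\<forall>i\<in>idx. a i \<noteq> 0 \<and> b i \<noteq> 0"
    and m': "\<forall>i\<in>idx. \<forall>j\<in>idx. m' i j = b i * a j * m i j"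
    using assms(1) unfolding rescaled_def by blast
  obtain i j k where \<sigma>: "\<sigma> = (i, j, k)" by (cases \<sigma>)
  define l where "l = fourth i j k"
  have I: "i \<in> idx" "j \<in> idx" "k \<in> idx" "l \<in> idx"
    using EF_D[of i j k] assms(2) unfolding \<sigma> l_def by auto
  then have "a i * a j * a k * a l * b i * b j * b k * b l \<noteq> 0"
    using ab by simp
  then show "triple_ratio_of m' \<sigma> = triple_ratio_of m \<sigma>" "edge_ratio_of m' \<sigma> = edge_ratio_of m \<sigma>"
    using I m' unfolding \<sigma> triple_ratio_of_def edge_ratio_of_def prod.case l_def[symmetric]
    by (simp_all add: field_simps)
qed

definition ratios :: "cfg \<Rightarrow> coords" where
  "ratios F = (restrict (triple_ratio F) EF, restrict (edge_ratio F) EF)"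

lemma Psi_cfg_class:
  assumes "F \<in> TetCfg" shows "Psi (cfg_class F) = ratios F"
proof -
  define G where "G = (SOME G. G \<in> cfg_class F)"
  have "G \<in> cfg_class F"
    unfolding G_def using mem_cfg_class[OF assms] by (rule someI)
  then have "rescaled (pairing F) (pairing G)"
    unfolding cfg_class_def by (auto intro: rescaled_pairing_if_cfg_equiv)
  then have "restrict (triple_ratio G) EF = restrict (triple_ratio F) EF"
    "restrict (edge_ratio G) EF = restrict (edge_ratio F) EF"
    unfolding triple_ratio_eq edge_ratio_eq by (auto intro!: restrict_ext ratios_of_rescaled)
  then show ?thesis unfolding Psi_def ratios_def G_def[symmetric] Let_def by simp
qed

lemma ratio_relations:
  assumes nz: "\<And>x y. x \<in> idx \<Longrightarrow> y \<in> idx \<Longrightarrow> x \<noteq> y \<Longrightarrow> m x y \<noteq> 0" and "\<sigma> \<in> EF"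
  shows "triple_ratio_of m \<sigma> = triple_ratio_of m (sigma_plus \<sigma>)"
    "triple_ratio_of m \<sigma> = triple_ratio_of m (sigma_minus \<sigma>)"
    "edge_ratio_of m \<sigma> = edge_ratio_of m (sigma_bar \<sigma>)"
    "triple_ratio_of m \<sigma> * edge_ratio_of m \<sigma> * edge_ratio_of m (sigma_plus \<sigma>) *
       edge_ratio_of m (sigma_minus \<sigma>) = 1"
    "triple_ratio_of m \<sigma> = edge_ratio_of m (sigma_op \<sigma>) * edge_ratio_of m (sigma_op (sigma_plus \<sigma>)) *
       edge_ratio_of m (sigma_op (sigma_minus \<sigma>))"
proof -
  obtain i j k where \<sigma>: "\<sigma> = (i, j, k)" by (cases \<sigma>)
  define l where "l = fourth i j k"
  have ijk: "(i, j, k) \<in> EF" using assms(2) \<sigma> by simp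
  have I: "i \<in> idx" "j \<in> idx" "k \<in> idx" "l \<in> idx" "distinct [i, j, k, l]"
    using EF_D[OF ijk] unfolding l_def by auto
  have n: "m i j \<noteq> 0" "m i k \<noteq> 0" "m i l \<noteq> 0" "m j i \<noteq> 0" "m j k \<noteq> 0" "m j l \<noteq> 0"
     "m k i \<noteq> 0" "m k j \<noteq> 0" "m k l \<noteq> 0" "m l i \<noteq> 0" "m l j \<noteq> 0" "m l k \<noteq> 0"
    using nz I by auto
  note defs = triple_ratio_of_def edge_ratio_of_def prod.case fourth_perm_EF[OF ijk, folded l_def]
  show "triple_ratio_of m \<sigma> = triple_ratio_of m (sigma_plus \<sigma>)"
    "triple_ratio_of m \<sigma> = triple_ratio_of m (sigma_minus \<sigma>)"
    "edge_ratio_of m \<sigma> = edge_ratio_of m (sigma_bar \<sigma>)"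
    unfolding \<sigma> sigma_simps l_def[symmetric] defs by (simp_all add: ac_simps)
  show "triple_ratio_of m \<sigma> * edge_ratio_of m \<sigma> * edge_ratio_of m (sigma_plus \<sigma>) *
       edge_ratio_of m (sigma_minus \<sigma>) = 1"
    "triple_ratio_of m \<sigma> = edge_ratio_of m (sigma_op \<sigma>) * edge_ratio_of m (sigma_op (sigma_plus \<sigma>)) *
       edge_ratio_of m (sigma_op (sigma_minus \<sigma>))"
    unfolding \<sigma> sigma_simps l_def[symmetric] defs using n by (simp_all add: field_simps)
qed

text \<open>If two coefficients had opposite signs, suitable positive weights would make the form vanish.\<close>
lemma same_sign_if_nonvanishing_on_pos_weights:
  fixes x :: "nat \<Rightarrow> real"
  assumes nonvanishing: "\<And>w. \<forall>i\<in>idx. w i > 0 \<Longrightarrow> (\<Sum>i\<in>idx. w i * x i) \<noteq> 0"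
    and m: "m \<in> idx" "x m = 0" and nz: "\<And>i. i \<in> idx \<Longrightarrow> i \<noteq> m \<Longrightarrow> x i \<noteq> 0"
    and jk: "j \<in> idx" "k \<in> idx" "j \<noteq> m" "k \<noteq> m"
  shows "0 < x j * x k"
proof (cases "j = k")
  case True
  then show ?thesis using nz[OF jk(1,3)] not_real_square_gt_zero by blast
next
  case False
  define l where "l = fourth m j k"
  have l: "l \<notin> {m, j, k}" "idx = {m, j, k, l}"
    using idx_eq_insert_fourth[of m j k] m jk False unfolding l_def by auto
  show ?thesis
  proof (rule ccontr)
    assume "\<not> ?thesis"
    then have "x j * x k < 0"
      using nz[OF jk(1,3)] nz[OF jk(2,4)] by (simp add: not_less order.order_iff_strict)
    moreover have "x l \<noteq> 0"
      using nz l by auto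
    ultimately obtain u v w where uvw: "u > 0" "v > 0" "w > 0" "u * x j + v * x k + w * x l = 0"
      by (rule pos_combination_eq_0)
    define c where "c i = (if i = j then u else if i = k then v else if i = l then w else 1)" for i
    have "(\<Sum>i\<in>idx. c i * x i) = c m * x m + c j * x j + c k * x k + c l * x l"
      unfolding l(2) using l(1) jk(3,4) False by (simp add: add.assoc)
    also have "\<dots> = 0"
      using l(1) jk(3,4) False uvw(4) m(2) unfolding c_def by (simp add: algebra_simps)
    finally show False
      using nonvanishing[of c] uvw(1-3) unfolding c_def by auto
  qed
qed

lemma tetrahedron_sign_pattern:
  assumes F: "F \<in> TetCfg"
  obtains s where "\<forall>i\<in>idx. s i = 1 \<or> s i = -1"
    "\<And>m j k. m \<in> idx \<Longrightarrow> j \<in> idx \<Longrightarrow> k \<in> idx \<Longrightarrow> j \<noteq> m \<Longrightarrow> k \<noteq> m \<Longrightarrow>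
        0 < (s j * pairing F m j) * (s k * pairing F m k)"
proof -
  obtain s where s: "\<forall>i\<in>idx. s i = 1 \<or> s i = -1" and tet: "\<forall>m\<in>idx. \<forall>w. (\<forall>i\<in>idx. w i > 0) \<longrightarrow>
      snd F m \<bullet> (\<Sum>i\<in>idx. (w i * s i) *\<^sub>R fst F i) \<noteq> 0"
    using TetCfgD(6)[OF F] by blast
  have "0 < (s j * pairing F m j) * (s k * pairing F m k)"
    if "m \<in> idx" "j \<in> idx" "k \<in> idx" "j \<noteq> m" "k \<noteq> m" for m j k
  proof (rule same_sign_if_nonvanishing_on_pos_weights[where x = "\<lambda>i. s i * pairing F m i"])
    show "(\<Sum>i\<in>idx. w i * (s i * pairing F m i)) \<noteq> 0" if "\<forall>i\<in>idx. w i > 0" for w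
    proof -
      have "snd F m \<bullet> (\<Sum>i\<in>idx. (w i * s i) *\<^sub>R fst F i) \<noteq> 0"
        using tet \<open>m \<in> idx\<close> that by blast
      then show ?thesis
        using inner_sum_pairing[of F m "\<lambda>i. w i * s i"] by (simp add: mult.assoc)
    qed
    show "s i * pairing F m i \<noteq> 0" if "i \<in> idx" "i \<noteq> m" for i
      using s pairing_eq_0_iff[OF F \<open>m \<in> idx\<close> that(1)] that by auto
  qed (use that pairing_eq_0_iff[OF F] in auto)
  with s show ?thesis using that by blast
qed

lemma ratios_of_pairing_pos:
  assumes F: "F \<in> TetCfg" and "\<sigma> \<in> EF"
  shows "triple_ratio_of (pairing F) \<sigma> > 0" "edge_ratio_of (pairing F) \<sigma> > 0"
proof -
  obtain s where s: "\<forall>i\<in>idx. s i = 1 \<or> s i = -1" and same_sign: "\<And>m j k. m \<in> idx \<Longrightarrow> j \<in> idx \<Longrightarrow>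
      k \<in> idx \<Longrightarrow> j \<noteq> m \<Longrightarrow> k \<noteq> m \<Longrightarrow> 0 < (s j * pairing F m j) * (s k * pairing F m k)"
    using tetrahedron_sign_pattern[OF F] by blast
  obtain i j k where \<sigma>: "\<sigma> = (i, j, k)" by (cases \<sigma>)
  define l where "l = fourth i j k"
  have I: "i \<in> idx" "j \<in> idx" "k \<in> idx" "l \<in> idx" "distinct [i, j, k, l]"
    using EF_D[of i j k] assms(2) unfolding \<sigma> l_def by auto
  have sq: "(s x)\<^sup>2 = 1" if "x \<in> idx" for x
    using s that by auto
  let ?m = "pairing F"
  have "0 < s j * ?m i j * (s k * ?m i k)" "0 < s k * ?m j k * (s i * ?m j i)"
    "0 < s i * ?m k i * (s j * ?m k j)"
    using same_sign I by auto
  then have "0 < (s j * ?m i j * (s k * ?m i k)) * (s k * ?m j k * (s i * ?m j i)) * (s i * ?m k i * (s j * ?m k j))"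
    by simp
  also have "\<dots> = (s i)\<^sup>2 * (s j)\<^sup>2 * (s k)\<^sup>2 * ((?m i j * ?m j k * ?m k i) * (?m i k * ?m j i * ?m k j))"
    by (simp add: power2_eq_square ac_simps)
  finally show "triple_ratio_of ?m \<sigma> > 0"
    unfolding \<sigma> triple_ratio_of_def using sq I by (simp add: zero_less_mult_iff zero_less_divide_iff)
  have "0 < s k * ?m i k * (s l * ?m i l)" "0 < s l * ?m j l * (s k * ?m j k)"
    using same_sign I by auto
  then have "0 < (s k * ?m i k * (s l * ?m i l)) * (s l * ?m j l * (s k * ?m j k))"
    by simp
  also have "\<dots> = (s k)\<^sup>2 * (s l)\<^sup>2 * ((?m i k * ?m j l) * (?m i l * ?m j k))"
    by (simp add: power2_eq_square ac_simps)
  finally show "edge_ratio_of ?m \<sigma> > 0"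
    unfolding \<sigma> edge_ratio_of_def prod.case l_def[symmetric] using sq I
    by (simp add: zero_less_mult_iff zero_less_divide_iff)
qed

lemma ratios_in_Dplus_T:
  assumes F: "F \<in> TetCfg" shows "ratios F \<in> Dplus_T"
proof -
  define t e where "t = restrict (triple_ratio F) EF" and "e = restrict (edge_ratio F) EF"
  have "t \<sigma> > 0 \<and> e \<sigma> > 0 \<and> t \<sigma> = t (sigma_plus \<sigma>) \<and> t \<sigma> = t (sigma_minus \<sigma>) \<and>
      e \<sigma> = e (sigma_bar \<sigma>) \<and> t \<sigma> * e \<sigma> * e (sigma_plus \<sigma>) * e (sigma_minus \<sigma>) = 1 \<and>
      t \<sigma> = e (sigma_op \<sigma>) * e (sigma_op (sigma_plus \<sigma>)) * e (sigma_op (sigma_minus \<sigma>))"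
    if "\<sigma> \<in> EF" for \<sigma>
    using that EF_sigma_closed[OF that] EF_sigma_closed(4)[OF EF_sigma_closed(1)[OF that]]
      EF_sigma_closed(4)[OF EF_sigma_closed(2)[OF that]]
      ratio_relations[of "pairing F", OF _ that] pairing_eq_0_iff[OF F] ratios_of_pairing_pos[OF F that]
    by (simp add: t_def e_def triple_ratio_eq edge_ratio_eq)
  moreover have "t \<in> PiE EF (\<lambda>_. UNIV)" "e \<in> PiE EF (\<lambda>_. UNIV)"
    by (simp_all add: t_def e_def)
  ultimately show ?thesis
    unfolding ratios_def t_def[symmetric] e_def[symmetric] Dplus_T_def by blast
qed

lemma Dplus_T_PiE: "d \<in> Dplus_T \<Longrightarrow> fst d \<in> PiE EF (\<lambda>_. UNIV) \<and> snd d \<in> PiE EF (\<lambda>_. UNIV)"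
  by (cases d) (simp add: Dplus_T_def)

lemma Dplus_TD:
  assumes "(t, e) \<in> Dplus_T" "\<sigma> \<in> EF"
  shows "t \<sigma> > 0" "e \<sigma> > 0" "e \<sigma> = e (sigma_bar \<sigma>)"
    "t \<sigma> * e \<sigma> * e (sigma_plus \<sigma>) * e (sigma_minus \<sigma>) = 1"
    "t \<sigma> = e (sigma_op \<sigma>) * e (sigma_op (sigma_plus \<sigma>)) * e (sigma_op (sigma_minus \<sigma>))"
  using assms unfolding Dplus_T_def by auto

lemma Dplus_T_edge_34:
  assumes "(t, e) \<in> Dplus_T"
  shows "e (3,4,1) = 1 / (e (1,2,3) * e (1,3,4) * e (2,3,1) * e (1,4,2) * e (2,4,3))"
proof -
  note D = Dplus_TD[OF assms]
  have "(1,2,3) \<in> EF" "(1,3,4) \<in> EF" "(2,3,1) \<in> EF" "(1,4,2) \<in> EF" "(2,4,3) \<in> EF" "(3,4,1) \<in> EF"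
    by (simp_all add: EF_eq)
  note E = this
  have "t (1,2,3) * e (1,2,3) * e (3,1,2) * e (2,3,1) = 1" "t (1,2,3) = e (4,3,2) * e (4,2,1) * e (4,1,3)"
    using D(4,5)[OF E(1)] by simp_all
  moreover have "e (3,1,2) = e (1,3,4)" "e (4,2,1) = e (2,4,3)" "e (4,1,3) = e (1,4,2)" "e (4,3,2) = e (3,4,1)"
    using D(3)[OF E(2)] D(3)[OF E(5)] D(3)[OF E(4)] D(3)[OF E(6)] by simp_all
  ultimately have "e (3,4,1) * (e (1,2,3) * e (1,3,4) * e (2,3,1) * e (1,4,2) * e (2,4,3)) = 1"
    by (simp add: ac_simps)
  moreover have "e (1,2,3) * e (1,3,4) * e (2,3,1) * e (1,4,2) * e (2,4,3) \<noteq> 0"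
    using D(2)[OF E(1)] D(2)[OF E(2)] D(2)[OF E(3)] D(2)[OF E(4)] D(2)[OF E(5)] by simp
  ultimately show ?thesis
    by (simp add: eq_divide_eq)
qed

lemma continuous_map_into_Dplus_top:
  assumes "f \<in> topspace X \<rightarrow> Dplus_T"
    and "\<And>\<sigma>. \<sigma> \<in> EF \<Longrightarrow> continuous_map X euclideanreal (\<lambda>x. fst (f x) \<sigma>)"
    and "\<And>\<sigma>. \<sigma> \<in> EF \<Longrightarrow> continuous_map X euclideanreal (\<lambda>x. snd (f x) \<sigma>)"
  shows "continuous_map X Dplus_top f"
proof -
  have "fst (f x) \<in> extensional EF \<and> snd (f x) \<in> extensional EF" if "x \<in> topspace X" for x
    using Dplus_T_PiE[of "f x"] assms(1) that by (auto simp: PiE_iff)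
  then have "continuous_map X (product_topology (\<lambda>_. euclideanreal) EF) (fst \<circ> f)"
    "continuous_map X (product_topology (\<lambda>_. euclideanreal) EF) (snd \<circ> f)"
    unfolding continuous_map_componentwise using assms(2,3) by auto
  then show ?thesis
    unfolding Dplus_top_def continuous_map_in_subtopology continuous_map_pairwise using assms(1) by blast
qed

lemma continuous_map_pairing:
  assumes "i \<in> idx" "j \<in> idx"
  shows "continuous_map cfg_top euclideanreal (\<lambda>F. pairing F i j)"
proof -
  let ?X = "prod_topology (product_topology (\<lambda>_. euclidean) idx) (product_topology (\<lambda>_. euclidean) idx)
    :: cfg topology"
  have "continuous_map ?X euclidean (\<lambda>F. snd F i)" "continuous_map ?X euclidean (\<lambda>F. fst F j)"
    using assms by (auto intro!: continuous_map_compose[OF continuous_map_snd, unfolded o_def]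
        continuous_map_compose[OF continuous_map_fst, unfolded o_def] continuous_map_product_projection)
  then have "continuous_map ?X (prod_topology euclidean euclidean) (\<lambda>F. (snd F i, fst F j))"
    by (rule continuous_map_pairedI)
  then have "continuous_map ?X euclideanreal ((\<lambda>z. fst z \<bullet> snd z) \<circ> (\<lambda>F. (snd F i, fst F j)))"
    by (rule continuous_map_compose) (simp add: continuous_intros)
  then have "continuous_map ?X euclideanreal (\<lambda>F. pairing F i j)"
    by (simp add: o_def pairing_def)
  then show ?thesis
    unfolding cfg_top_def by (rule continuous_map_from_subtopology)
qed

lemma continuous_map_ratios: "continuous_map cfg_top Dplus_top ratios"
proof (rule continuous_map_into_Dplus_top)
  show "ratios \<in> topspace cfg_top \<rightarrow> Dplus_T"
    using ratios_in_Dplus_T by (simp add: topspace_cfg_top)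
  have nz: "pairing F x y \<noteq> 0" if "F \<in> topspace cfg_top" "x \<in> idx" "y \<in> idx" "x \<noteq> y" for F x y
    using that pairing_eq_0_iff by (simp add: topspace_cfg_top)
  fix \<sigma> assume "\<sigma> \<in> EF"
  moreover obtain i j k where \<sigma>: "\<sigma> = (i, j, k)" by (cases \<sigma>)
  ultimately have I: "i \<in> idx" "j \<in> idx" "k \<in> idx" "fourth i j k \<in> idx" "distinct [i, j, k, fourth i j k]"
    using EF_D by auto
  have "fst (ratios F) \<sigma> = (pairing F i j * pairing F j k * pairing F k i) /
      (pairing F i k * pairing F j i * pairing F k j)"
    "snd (ratios F) \<sigma> = (pairing F i k * pairing F j (fourth i j k)) /
      (pairing F i (fourth i j k) * pairing F j k)" for F
    using \<open>\<sigma> \<in> EF\<close> unfolding \<sigma>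
    by (simp_all add: ratios_def triple_ratio_eq edge_ratio_eq triple_ratio_of_def edge_ratio_of_def)
  then show "continuous_map cfg_top euclideanreal (\<lambda>F. fst (ratios F) \<sigma>)"
    "continuous_map cfg_top euclideanreal (\<lambda>F. snd (ratios F) \<sigma>)"
    using I by (simp_all only:)
      (intro continuous_map_real_divide continuous_map_real_mult continuous_map_pairing; simp add: nz)+
qed

lemma continuous_map_Psi: "continuous_map FL_T Dplus_top Psi"
  unfolding FL_T_def
proof (rule continuous_map_from_quotient_topology)
  show "continuous_map cfg_top Dplus_top (Psi \<circ> cfg_class)"
    using continuous_map_ratios by (rule continuous_map_eq) (simp add: topspace_cfg_top Psi_cfg_class)
qed


section \<open>Edge coordinates on \<open>\<D>\<^sup>+\<^sub>T\<close>\<close>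

definition pos5 :: "(real \<times> real \<times> real \<times> real \<times> real) set" where
  "pos5 = {(a, b, c, d, f). a > 0 \<and> b > 0 \<and> c > 0 \<and> d > 0 \<and> f > 0}"

lemma R5pos_eq: "R5pos = top_of_set pos5"
  by (simp add: R5pos_def pos5_def)

text \<open>\<open>e\<^sub>3\<^sub>4\<close> is forced by the relation \<open>e\<^sub>1\<^sub>2 e\<^sub>1\<^sub>3 e\<^sub>2\<^sub>3 e\<^sub>1\<^sub>4 e\<^sub>2\<^sub>4 e\<^sub>3\<^sub>4 = 1\<close> of \<open>\<D>\<^sup>+\<^sub>T\<close>.\<close>
definition edge_param :: "nat \<Rightarrow> nat \<Rightarrow> real \<times> real \<times> real \<times> real \<times> real \<Rightarrow> real" where
  "edge_param i j =
     (if {i, j} = {1, 2} then (\<lambda>(a, b, c, d, f). a)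
      else if {i, j} = {1, 3} then (\<lambda>(a, b, c, d, f). b)
      else if {i, j} = {2, 3} then (\<lambda>(a, b, c, d, f). c)
      else if {i, j} = {1, 4} then (\<lambda>(a, b, c, d, f). d)
      else if {i, j} = {2, 4} then (\<lambda>(a, b, c, d, f). f)
      else (\<lambda>(a, b, c, d, f). 1 / (a * b * c * d * f)))"

lemma edge_param_eval [simp]:
  "edge_param 1 2 (a, b, c, d, f) = a" "edge_param 2 1 (a, b, c, d, f) = a"
  "edge_param 1 3 (a, b, c, d, f) = b" "edge_param 3 1 (a, b, c, d, f) = b"
  "edge_param 2 3 (a, b, c, d, f) = c" "edge_param 3 2 (a, b, c, d, f) = c"
  "edge_param 1 4 (a, b, c, d, f) = d" "edge_param 4 1 (a, b, c, d, f) = d"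
  "edge_param 2 4 (a, b, c, d, f) = f" "edge_param 4 2 (a, b, c, d, f) = f"
  "edge_param 3 4 (a, b, c, d, f) = 1 / (a * b * c * d * f)"
  "edge_param 4 3 (a, b, c, d, f) = 1 / (a * b * c * d * f)"
  by (simp_all add: edge_param_def doubleton_eq_iff)

lemmas edge_param_eval_Suc [simp] = edge_param_eval [unfolded One_nat_def]

lemma edge_param_cases:
  "edge_param i j \<in> {\<lambda>(a, b, c, d, f). a, \<lambda>(a, b, c, d, f). b, \<lambda>(a, b, c, d, f). c,
     \<lambda>(a, b, c, d, f). d, \<lambda>(a, b, c, d, f). f, \<lambda>(a, b, c, d, f). 1 / (a * b * c * d * f)}"
  by (simp add: edge_param_def)

lemma edge_param_pos: "p \<in> pos5 \<Longrightarrow> edge_param i j p > 0"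
  using edge_param_cases[of i j] by (auto simp: pos5_def)

lemma continuous_on_edge_param: "continuous_on pos5 (edge_param i j)"
  using edge_param_cases[of i j] by (auto simp: pos5_def case_prod_unfold intro!: continuous_intros)

definition coords_of_edges :: "real \<times> real \<times> real \<times> real \<times> real \<Rightarrow> coords" where
  "coords_of_edges p =
     (restrict (\<lambda>(i, j, k). 1 / (edge_param i j p * edge_param j k p * edge_param k i p)) EF,
      restrict (\<lambda>(i, j, k). edge_param i j p) EF)"

lemma coords_of_edges_in_Dplus_T:
  assumes "p \<in> pos5" shows "coords_of_edges p \<in> Dplus_T"
proof -
  obtain a b c d f where p: "p = (a, b, c, d, f)" and pos: "a > 0" "b > 0" "c > 0" "d > 0" "f > 0"
    using assms unfolding pos5_def by auto
  define t e where "t = fst (coords_of_edges p)" and "e = snd (coords_of_edges p)"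
  have "t \<sigma> > 0 \<and> e \<sigma> > 0 \<and> t \<sigma> = t (sigma_plus \<sigma>) \<and> t \<sigma> = t (sigma_minus \<sigma>) \<and>
      e \<sigma> = e (sigma_bar \<sigma>) \<and> t \<sigma> * e \<sigma> * e (sigma_plus \<sigma>) * e (sigma_minus \<sigma>) = 1 \<and>
      t \<sigma> = e (sigma_op \<sigma>) * e (sigma_op (sigma_plus \<sigma>)) * e (sigma_op (sigma_minus \<sigma>))"
    if "\<sigma> \<in> EF" for \<sigma>
    using that unfolding EF_eq t_def e_def coords_of_edges_def p
    by (elim insertE emptyE) (use pos in \<open>simp_all add: EF_eq field_simps\<close>)
  moreover have "t \<in> PiE EF (\<lambda>_. UNIV)" "e \<in> PiE EF (\<lambda>_. UNIV)"
    by (simp_all add: t_def e_def coords_of_edges_def)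
  ultimately show ?thesis
    unfolding Dplus_T_def using prod.collapse[of "coords_of_edges p", folded t_def e_def] by force
qed

lemma edge_coords_coords_of_edges: "edge_coords (coords_of_edges p) = p"
  by (cases p) (simp add: edge_coords_def coords_of_edges_def EF_eq)

lemma edge_coords_in_pos5:
  assumes "d \<in> Dplus_T" shows "edge_coords d \<in> pos5"
proof -
  have "\<forall>\<sigma>\<in>EF. snd d \<sigma> > 0"
    using Dplus_TD(2)[of "fst d" "snd d"] assms by simp
  then show ?thesis
    by (simp add: edge_coords_def pos5_def EF_eq Let_def)
qed

lemma coords_of_edges_edge_coords:
  assumes "d \<in> Dplus_T" shows "coords_of_edges (edge_coords d) = d"
proof -
  obtain t e where d: "d = (t, e)" by (cases d)
  note D = Dplus_TD[OF assms[unfolded d]]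
  have tE: "t \<in> PiE EF (\<lambda>_. UNIV)" and eE: "e \<in> PiE EF (\<lambda>_. UNIV)"
    using Dplus_T_PiE[OF assms] unfolding d by simp_all
  define p where "p = edge_coords d"
  have p: "p \<in> pos5" unfolding p_def using assms by (rule edge_coords_in_pos5)
  have e: "e \<sigma> = (case \<sigma> of (i, j, k) \<Rightarrow> edge_param i j p)" if "\<sigma> \<in> EF" for \<sigma>
  proof -
    have "(1,2,3) \<in> EF" "(1,3,4) \<in> EF" "(2,3,1) \<in> EF" "(1,4,2) \<in> EF" "(2,4,3) \<in> EF" "(3,4,1) \<in> EF"
      by (simp_all add: EF_eq)
    note E = this
    show ?thesis
      using that D(3)[OF E(1)] D(3)[OF E(2)] D(3)[OF E(3)] D(3)[OF E(4)] D(3)[OF E(5)] D(3)[OF E(6)]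
        Dplus_T_edge_34[OF assms[unfolded d]]
      unfolding p_def d edge_coords_def Let_def snd_conv EF_eq
      by (elim insertE emptyE) (simp_all add: EF_eq)
  qed
  have t: "t \<sigma> = (case \<sigma> of (i, j, k) \<Rightarrow> 1 / (edge_param i j p * edge_param j k p * edge_param k i p))"
    if "\<sigma> \<in> EF" for \<sigma>
  proof -
    obtain i j k where \<sigma>: "\<sigma> = (i, j, k)" by (cases \<sigma>)
    have "t (i, j, k) * e (i, j, k) * e (k, i, j) * e (j, k, i) = 1"
      using D(4)[OF that] unfolding \<sigma> by simp
    then show ?thesis
      using e[OF that] e[OF EF_sigma_closed(1)[OF that]] e[OF EF_sigma_closed(2)[OF that]]
        edge_param_pos[OF p, of i j] edge_param_pos[OF p, of j k] edge_param_pos[OF p, of k i]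
      unfolding \<sigma> by (simp add: field_simps)
  qed
  have "restrict (\<lambda>(i, j, k). edge_param i j p) EF = restrict e EF"
    by (rule restrict_ext) (simp add: e)
  moreover have "restrict (\<lambda>(i, j, k). 1 / (edge_param i j p * edge_param j k p * edge_param k i p)) EF =
      restrict t EF"
    by (rule restrict_ext) (simp add: t)
  ultimately have "coords_of_edges p = (t, e)"
    unfolding coords_of_edges_def using tE eE by simp
  then show ?thesis
    unfolding p_def[symmetric] by (simp add: d)
qed

lemma continuous_map_edge_coords: "continuous_map Dplus_top R5pos edge_coords"
proof -
  have c: "continuous_map Dplus_top euclideanreal (\<lambda>d. snd d \<sigma>)" if "\<sigma> \<in> EF" for \<sigma>
    unfolding Dplus_top_def using that
    by (intro continuous_map_from_subtopology continuous_map_compose[OF continuous_map_snd, unfolded o_def]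
        continuous_map_product_projection)
  have "(1,2,3) \<in> EF" "(1,3,4) \<in> EF" "(2,3,1) \<in> EF" "(1,4,2) \<in> EF" "(2,4,3) \<in> EF"
    by (simp_all add: EF_eq)
  then have "continuous_map Dplus_top (prod_topology euclideanreal (prod_topology euclideanreal
      (prod_topology euclideanreal (prod_topology euclideanreal euclideanreal)))) edge_coords"
    unfolding edge_coords_def Let_def by (intro continuous_map_pairedI c)
  then have "continuous_map Dplus_top euclidean edge_coords"
    by simp
  moreover have "edge_coords \<in> topspace Dplus_top \<rightarrow> pos5"
    using edge_coords_in_pos5 by (auto simp: Dplus_top_def)
  ultimately show ?thesis
    unfolding R5pos_eq continuous_map_in_subtopology by simp
qed

lemma continuous_map_coords_of_edges: "continuous_map R5pos Dplus_top coords_of_edges"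
proof (rule continuous_map_into_Dplus_top)
  show "coords_of_edges \<in> topspace R5pos \<rightarrow> Dplus_T"
    using coords_of_edges_in_Dplus_T by (simp add: R5pos_eq)
  have pos: "edge_param i j p \<noteq> 0" if "p \<in> pos5" for i j p
    using edge_param_pos[OF that, of i j] by linarith
  fix \<sigma> assume "\<sigma> \<in> EF"
  moreover obtain i j k where "\<sigma> = (i, j, k)" by (cases \<sigma>)
  ultimately show "continuous_map R5pos euclideanreal (\<lambda>p. fst (coords_of_edges p) \<sigma>)"
    "continuous_map R5pos euclideanreal (\<lambda>p. snd (coords_of_edges p) \<sigma>)"
    unfolding R5pos_eq using pos
    by (auto simp: coords_of_edges_def intro!: continuous_intros continuous_on_edge_param)
qed

lemma homeomorphic_map_edge_coords: "homeomorphic_map Dplus_top R5pos edge_coords"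
  unfolding homeomorphic_map_maps homeomorphic_maps_def
  using continuous_map_edge_coords continuous_map_coords_of_edges coords_of_edges_edge_coords
    edge_coords_coords_of_edges
  by (intro exI[of _ coords_of_edges]) (auto simp: Dplus_top_def)


section \<open>The normal form of a tetrahedron of flags\<close>

definition basis_vec :: "nat \<Rightarrow> real^4" where
  "basis_vec i = axis (if i = 1 then 1 else if i = 2 then 2 else if i = 3 then 3 else 4) 1"

lemma inner_basis_vec:
  assumes "i \<in> idx" "j \<in> idx" shows "basis_vec i \<bullet> basis_vec j = (if i = j then 1 else 0)"
  using assms unfolding idx_eq by (auto simp: basis_vec_def inner_axis_axis)

lemma basis_vec_in_Basis: "basis_vec i \<in> Basis"
  by (simp add: basis_vec_def axis_in_Basis_iff)

lemma inj_on_basis_vec: "inj_on basis_vec idx"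
  unfolding inj_on_def idx_eq by (auto simp: basis_vec_def axis_eq_axis)

text \<open>The pairing matrix of the normal form: the vertices are the standard basis, rescaling
  normalises the first row, the first column and the entry (2,3) to 1, and the remaining five
  entries are then determined by the edge coordinates \<open>(e\<^sub>1\<^sub>2, e\<^sub>1\<^sub>3, e\<^sub>2\<^sub>3, e\<^sub>1\<^sub>4, e\<^sub>2\<^sub>4)\<close>.\<close>
definition normal_pairing :: "nat \<Rightarrow> nat \<Rightarrow> real \<times> real \<times> real \<times> real \<times> real \<Rightarrow> real" where
  "normal_pairing i j =
     (if i = j then (\<lambda>_. 0)
      else if i = 1 \<or> j = 1 \<or> (i, j) = (2, 3) then (\<lambda>_. 1)
      else if (i, j) = (2, 4) then (\<lambda>(a, b, c, d, f). a)
      else if (i, j) = (3, 4) then (\<lambda>(a, b, c, d, f). a * c)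
      else if (i, j) = (3, 2) then (\<lambda>(a, b, c, d, f). a * b * c)
      else if (i, j) = (4, 3) then (\<lambda>(a, b, c, d, f). 1 / f)
      else (\<lambda>(a, b, c, d, f). 1 / (d * f)))"

lemma normal_pairing_cases:
  "i \<noteq> j \<Longrightarrow> normal_pairing i j \<in> {\<lambda>_. 1, \<lambda>(a, b, c, d, f). a, \<lambda>(a, b, c, d, f). a * c,
     \<lambda>(a, b, c, d, f). a * b * c, \<lambda>(a, b, c, d, f). 1 / f, \<lambda>(a, b, c, d, f). 1 / (d * f)}"
  by (simp add: normal_pairing_def)

lemma normal_pairing_pos: "p \<in> pos5 \<Longrightarrow> i \<noteq> j \<Longrightarrow> normal_pairing i j p > 0"
  using normal_pairing_cases[of i j] by (auto simp: pos5_def)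

lemma normal_pairing_diag [simp]: "normal_pairing i i p = 0"
  by (simp add: normal_pairing_def)

lemma continuous_on_normal_pairing: "continuous_on pos5 (normal_pairing i j)"
proof (cases "i = j")
  case False
  then show ?thesis
    using normal_pairing_cases[of i j] by (auto simp: pos5_def case_prod_unfold intro!: continuous_intros)
qed (simp add: normal_pairing_def continuous_on_const)

definition normal_form :: "real \<times> real \<times> real \<times> real \<times> real \<Rightarrow> cfg" where
  "normal_form p = (restrict basis_vec idx,
     restrict (\<lambda>i. \<Sum>j\<in>idx. normal_pairing i j p *\<^sub>R basis_vec j) idx)"

lemma pairing_normal_form:
  assumes "i \<in> idx" "j \<in> idx" shows "pairing (normal_form p) i j = normal_pairing i j p"
proof -
  have "pairing (normal_form p) i j = (\<Sum>l\<in>idx. normal_pairing i l p * (basis_vec l \<bullet> basis_vec j))"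
    using assms by (simp add: normal_form_def pairing_def inner_sum_left)
  also have "\<dots> = (\<Sum>l\<in>idx. if l = j then normal_pairing i l p else 0)"
    using assms(2) by (intro sum.cong) (simp_all add: inner_basis_vec)
  finally show ?thesis
    using assms(2) by (simp add: idx_eq)
qed

lemma rescaled_normal_pairing_normal_form:
  "rescaled (\<lambda>i j. normal_pairing i j p) (pairing (normal_form p))"
  unfolding rescaled_def by (intro exI[of _ "\<lambda>_. 1"]) (simp add: pairing_normal_form)

lemma normal_form_in_TetCfg:
  assumes p: "p \<in> pos5" shows "normal_form p \<in> TetCfg"
proof -
  let ?F = "normal_form p"
  have m: "pairing ?F i j = 0 \<longleftrightarrow> i = j" if "i \<in> idx" "j \<in> idx" for i j
    using that normal_pairing_pos[OF p, of i j] by (cases "i = j") (auto simp: pairing_normal_form)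
  have other: "\<exists>j\<in>idx. j \<noteq> i" for i
    by (cases "i = 1") (auto simp: idx_eq)
  have V: "fst ?F i \<noteq> 0" if "i \<in> idx" for i
    using nonzero_Basis[OF basis_vec_in_Basis] that by (simp add: normal_form_def)
  have \<eta>: "snd ?F i \<noteq> 0" if "i \<in> idx" for i
    using other[of i] m[OF that] by (auto simp: pairing_def)
  have img: "fst ?F ` idx = basis_vec ` idx"
    by (simp add: normal_form_def)
  have ind: "independent (basis_vec ` idx)"
    by (rule independent_mono[OF independent_Basis]) (auto simp: basis_vec_in_Basis)
  have card: "card (basis_vec ` idx) = 4"
    unfolding card_image[OF inj_on_basis_vec] by (rule card_idx)
  have tet: "snd ?F m \<bullet> (\<Sum>i\<in>idx. (w i * 1) *\<^sub>R fst ?F i) \<noteq> 0"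
    if "m \<in> idx" "\<forall>i\<in>idx. w i > 0" for m w
  proof -
    obtain j where j: "j \<in> idx" "j \<noteq> m" using other by blast
    have "0 \<le> w i * pairing ?F m i" if "i \<in> idx" for i
      using \<open>m \<in> idx\<close> that \<open>\<forall>i\<in>idx. w i > 0\<close> normal_pairing_pos[OF p, of m i]
      by (cases "i = m") (auto simp: pairing_normal_form)
    moreover have "0 < w j * pairing ?F m j"
      using \<open>m \<in> idx\<close> j \<open>\<forall>i\<in>idx. w i > 0\<close> normal_pairing_pos[OF p, of m j]
      by (simp add: pairing_normal_form)
    ultimately have "0 < (\<Sum>i\<in>idx. w i * pairing ?F m i)"
      using j(1) by (intro sum_pos2[where i=j]) simp_all
    then show ?thesis by (simp add: inner_sum_pairing)
  qed
  show ?thesis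
    unfolding TetCfg_def is_tetrahedron_of_flags_def Let_def mem_Collect_eq img
    using V \<eta> m ind card tet by (auto simp: normal_form_def pairing_def intro!: exI[of _ "\<lambda>_. 1"])
qed

lemma ratios_normal_form:
  assumes "p \<in> pos5" shows "ratios (normal_form p) = coords_of_edges p"
proof -
  obtain a b c d f where p: "p = (a, b, c, d, f)" and pos: "a > 0" "b > 0" "c > 0" "d > 0" "f > 0"
    using assms unfolding pos5_def by auto
  let ?m = "\<lambda>i j. normal_pairing i j p"
  have t: "triple_ratio_of ?m \<sigma> =
      (case \<sigma> of (i, j, k) \<Rightarrow> 1 / (edge_param i j p * edge_param j k p * edge_param k i p))"
    and e: "edge_ratio_of ?m \<sigma> = (case \<sigma> of (i, j, k) \<Rightarrow> edge_param i j p)" if "\<sigma> \<in> EF" for \<sigma>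
    using that pos unfolding EF_eq p
    by (auto simp: triple_ratio_of_def edge_ratio_of_def normal_pairing_def field_simps)
  have "ratios (normal_form p) = (restrict (triple_ratio_of ?m) EF, restrict (edge_ratio_of ?m) EF)"
    unfolding ratios_def triple_ratio_eq edge_ratio_eq prod.inject
    by (intro conjI restrict_ext ratios_of_rescaled[OF rescaled_normal_pairing_normal_form])
  also have "\<dots> = coords_of_edges p"
    unfolding coords_of_edges_def prod.inject by (intro conjI restrict_ext) (simp_all add: t e)
  finally show ?thesis .
qed

lemma continuous_map_normal_form: "continuous_map R5pos cfg_top normal_form"
proof -
  have "continuous_map R5pos (product_topology (\<lambda>_. euclidean) idx) (\<lambda>p. fst (normal_form p))"
    by (simp add: normal_form_def)
  moreover have "continuous_map R5pos (product_topology (\<lambda>_. euclidean) idx) (\<lambda>p. snd (normal_form p))"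
    unfolding continuous_map_componentwise R5pos_eq
    by (auto simp: normal_form_def intro!: continuous_intros continuous_on_normal_pairing)
  moreover have "normal_form \<in> topspace R5pos \<rightarrow> TetCfg"
    using normal_form_in_TetCfg by (simp add: R5pos_eq)
  ultimately show ?thesis
    unfolding cfg_top_def continuous_map_in_subtopology continuous_map_pairwise o_def by simp
qed

lemma rescaled_normal_pairing:
  assumes F: "F \<in> TetCfg"
  shows "rescaled (pairing F) (\<lambda>i j. normal_pairing i j (edge_coords (ratios F)))"
proof -
  define m where "m = pairing F"
  have n: "m i j \<noteq> 0" if "i \<in> idx" "j \<in> idx" "i \<noteq> j" for i j
    using pairing_eq_0_iff[OF F] that unfolding m_def by blast
  have n12: "m 1 2 \<noteq> 0" "m 1 3 \<noteq> 0" "m 1 4 \<noteq> 0" "m 2 1 \<noteq> 0" "m 2 3 \<noteq> 0" "m 2 4 \<noteq> 0"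
     "m 3 1 \<noteq> 0" "m 3 2 \<noteq> 0" "m 3 4 \<noteq> 0" "m 4 1 \<noteq> 0" "m 4 2 \<noteq> 0" "m 4 3 \<noteq> 0"
    by (simp_all add: n idx_eq)
  have p: "edge_coords (ratios F) = (edge_ratio_of m (1,2,3), edge_ratio_of m (1,3,4),
      edge_ratio_of m (2,3,1), edge_ratio_of m (1,4,2), edge_ratio_of m (2,4,3))"
    unfolding edge_coords_def ratios_def m_def by (simp add: EF_eq edge_ratio_eq)
  define \<nu> where "\<nu> = m 2 3 / (m 2 1 * m 1 3)"
  define \<gamma> where "\<gamma> j = (if j = 1 then \<nu> else 1 / m 1 j)" for j
  define \<beta> where "\<beta> i = (if i = 1 then 1 else 1 / (\<nu> * m i 1))" for i
  have "\<nu> \<noteq> 0" using n12 unfolding \<nu>_def by simp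
  then have "\<gamma> j \<noteq> 0 \<and> \<beta> j \<noteq> 0" if "j \<in> idx" for j
    using that n12 unfolding \<gamma>_def \<beta>_def idx_eq by auto
  moreover have "normal_pairing i j (edge_coords (ratios F)) = \<beta> i * \<gamma> j * m i j"
    if "i \<in> idx" "j \<in> idx" for i j
    using that n12 \<open>\<nu> \<noteq> 0\<close> TetCfgD(3)[OF F]
    unfolding p idx_eq m_def[symmetric] pairing_def[symmetric]
    by (auto simp: normal_pairing_def edge_ratio_of_def \<beta>_def \<gamma>_def \<nu>_def field_simps)
  ultimately show ?thesis
    unfolding rescaled_def m_def by blast
qed

lemma cfg_equiv_normal_form:
  assumes F: "F \<in> TetCfg" shows "cfg_equiv F (normal_form (edge_coords (ratios F)))"
proof -
  have p: "edge_coords (ratios F) \<in> pos5"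
    using F by (intro edge_coords_in_pos5 ratios_in_Dplus_T)
  show ?thesis
    using F normal_form_in_TetCfg[OF p] rescaled_normal_pairing[OF F] rescaled_normal_pairing_normal_form
    by (blast intro: cfg_equiv_if_rescaled_pairing rescaled_trans)
qed

lemma homeomorphic_map_Psi: "homeomorphic_map FL_T Dplus_top Psi"
  unfolding homeomorphic_map_maps homeomorphic_maps_def
proof (intro exI[of _ "cfg_class \<circ> normal_form \<circ> edge_coords"] conjI ballI)
  show "continuous_map FL_T Dplus_top Psi" by (rule continuous_map_Psi)
  have "continuous_map cfg_top FL_T cfg_class"
    unfolding FL_T_def by (rule continuous_map_quotient_topology)
  then show "continuous_map Dplus_top FL_T (cfg_class \<circ> normal_form \<circ> edge_coords)"
    using continuous_map_edge_coords continuous_map_normal_form by (intro continuous_map_compose)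
  fix C assume "C \<in> topspace FL_T"
  then obtain F where F: "F \<in> TetCfg" "C = cfg_class F" by (auto simp: topspace_FL_T)
  have p: "edge_coords (ratios F) \<in> pos5"
    using F(1) by (intro edge_coords_in_pos5 ratios_in_Dplus_T)
  show "(cfg_class \<circ> normal_form \<circ> edge_coords) (Psi C) = C"
    using cfg_class_eq[OF F(1) normal_form_in_TetCfg[OF p] cfg_equiv_normal_form[OF F(1)]]
      Psi_cfg_class[OF F(1)] F(2) by simp
next
  fix d assume "d \<in> topspace Dplus_top"
  then have d: "d \<in> Dplus_T" by (simp add: Dplus_top_def Dplus_T_def)
  show "Psi ((cfg_class \<circ> normal_form \<circ> edge_coords) d) = d"
    using Psi_cfg_class[OF normal_form_in_TetCfg[OF edge_coords_in_pos5[OF d]]]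
      ratios_normal_form[OF edge_coords_in_pos5[OF d]] coords_of_edges_edge_coords[OF d]
    by simp
qed

theorem theorem2p6:
  shows "homeomorphic_map FL_T Dplus_top Psi \<and>
         homeomorphic_map Dplus_top R5pos edge_coords \<and>
         FL_T homeomorphic_space R5pos"
  using homeomorphic_map_Psi homeomorphic_map_edge_coords homeomorphic_map_compose
  unfolding homeomorphic_space by blast

end
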